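(* Let $F$ be a weighted graph with edge weight $\omega:E(F)\to\{3,4,5\}$. Assume that $F=T\cup P$, where $T$ is a spanning tree of $F$ all of whose edges have weight $3$ and $P$ is a non-spanning path of weight $\ell$ with end-vertices $x$ and $y$. If $F$ has no cycle of weight $11$ and $P$ has minimal weight among all $x,y$-paths in $F[N^1_F[P]]$, then $|N^1_F[P]|\ge\frac{\ell}{3}+\frac{5}{3}$.
   Context: The weight of a subgraph is the sum of the weights of its edges. $N^1_F[P]$ is the closed neighbourhood of $V(P)$ in $F$: all vertices at distance at most $1$ in $F$ from some vertex of $P$. A path is non-spanning if it does not contain all vertices of $F$. *)

theory Defs
  imports Complex_Main
begin

definition simple_graph :: "'a set \<Rightarrow> 'a set set \<Rightarrow> bool" where
  "simple_graph V E \<longleftrightarrow> finite V \<and>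
     (\<forall>e\<in>E. \<exists>u v. u \<noteq> v \<and> u \<in> V \<and> v \<in> V \<and> e = {u, v})"

definition path_edges :: "'a list \<Rightarrow> 'a set set" where
  "path_edges ps = set (map (\<lambda>(a, b). {a, b}) (zip ps (tl ps)))"

definition is_path :: "'a set \<Rightarrow> 'a set set \<Rightarrow> 'a list \<Rightarrow> bool" where
  "is_path V E ps \<longleftrightarrow> ps \<noteq> [] \<and> distinct ps \<and> set ps \<subseteq> V \<and> path_edges ps \<subseteq> E"

definition is_cycle :: "'a set \<Rightarrow> 'a set set \<Rightarrow> 'a list \<Rightarrow> bool" where
  "is_cycle V E cs \<longleftrightarrow> length cs \<ge> 3 \<and> is_path V E cs \<and> {last cs, hd cs} \<in> E"

definition cycle_edges :: "'a list \<Rightarrow> 'a set set" where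
  "cycle_edges cs = insert {last cs, hd cs} (path_edges cs)"

definition weight :: "('a set \<Rightarrow> nat) \<Rightarrow> 'a set set \<Rightarrow> nat" where
  "weight w A = (\<Sum>e\<in>A. w e)"

definition connected_graph :: "'a set \<Rightarrow> 'a set set \<Rightarrow> bool" where
  "connected_graph V E \<longleftrightarrow>
     (\<forall>u\<in>V. \<forall>v\<in>V. \<exists>ps. is_path V E ps \<and> hd ps = u \<and> last ps = v)"

definition is_tree :: "'a set \<Rightarrow> 'a set set \<Rightarrow> bool" where
  "is_tree V E \<longleftrightarrow> simple_graph V E \<and> connected_graph V E \<and> (\<nexists>cs. is_cycle V E cs)"

definition spanning_tree :: "'a set \<Rightarrow> 'a set set \<Rightarrow> 'a set set \<Rightarrow> bool" where
  "spanning_tree V E ET \<longleftrightarrow> ET \<subseteq> E \<and> is_tree V ET"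

definition closed_nbhd :: "'a set \<Rightarrow> 'a set set \<Rightarrow> 'a set \<Rightarrow> 'a set" where
  "closed_nbhd V E S = S \<union> {v\<in>V. \<exists>u\<in>S. {u, v} \<in> E}"

definition induced_edges :: "'a set set \<Rightarrow> 'a set \<Rightarrow> 'a set set" where
  "induced_edges E S = {e\<in>E. e \<subseteq> S}"

end

theory Submission
  imports Defs
begin

(*
  Write P = v_0 ... v_k. Minimality of P in F[N[P]] forbids cheap detours: a tree edge v_i v_j
  (of weight 3) forces j = i + 1 and a step of weight 3, and a common neighbour z outside P of
  v_i and v_j (reached by two tree edges) forces the steps between them to weigh at most 6.
  A heavy step (weight at least 4) whose ends have a common outside neighbour has weight 4, as
  otherwise a triangle of weight 3 + 3 + 5 = 11 appears, and no outside vertex serves two heavy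
  steps. The remaining heavy steps cut P into blocks that are joined neither by tree edges nor by
  common outside neighbours; since T is connected and spans a vertex off P, every block has its
  own outside neighbour. With m outside vertices in N[P] this gives l <= 3k + 2(m - 1) + m,
  while |N[P]| = k + 1 + m.
*)

lemma simple_graph_edgeD:
  assumes "simple_graph V E" "{a, b} \<in> E"
  shows "a \<in> V" "b \<in> V" "a \<noteq> b"
  using assms unfolding simple_graph_def by (auto simp: doubleton_eq_iff)

lemma path_edges_Nil [simp]: "path_edges [] = {}"
  and path_edges_singleton [simp]: "path_edges [a] = {}"
  and path_edges_Cons_Cons [simp]: "path_edges (a # b # xs) = insert {a, b} (path_edges (b # xs))"
  by (simp_all add: path_edges_def)

lemma finite_path_edges [simp]: "finite (path_edges xs)"
  by (simp add: path_edges_def)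

lemma path_edges_subset_set: "e \<in> path_edges xs \<Longrightarrow> e \<subseteq> set xs"
  by (induction xs rule: induct_list012) auto

lemma nth_edge_in_path_edges: "Suc t < length xs \<Longrightarrow> {xs ! t, xs ! Suc t} \<in> path_edges xs"
  unfolding path_edges_def by (force simp: in_set_zip nth_tl)

lemma path_edges_glue:
  "xs \<noteq> [] \<Longrightarrow> last xs = hd ys \<Longrightarrow> path_edges (xs @ tl ys) = path_edges xs \<union> path_edges ys"
proof (induction xs rule: induct_list012)
  case (2 a)
  then show ?case by (cases ys) auto
qed auto

lemma take_Suc_glue_drop:
  assumes "n < length xs"
  shows "take (Suc n) xs \<noteq> []" "last (take (Suc n) xs) = hd (drop n xs)"
    and "take (Suc n) xs @ tl (drop n xs) = xs"
proof -
  show "take (Suc n) xs \<noteq> []" "last (take (Suc n) xs) = hd (drop n xs)"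
    using assms by (simp_all add: take_Suc_conv_app_nth hd_drop_conv_nth)
  have "tl (drop n xs) = drop (Suc n) xs"
    by (simp add: drop_Suc tl_drop)
  then show "take (Suc n) xs @ tl (drop n xs) = xs"
    by simp
qed

lemma path_edges_split_at:
  "n < length xs \<Longrightarrow> path_edges xs = path_edges (take (Suc n) xs) \<union> path_edges (drop n xs)"
  using path_edges_glue take_Suc_glue_drop by metis

lemma path_edges_crossing:
  "xs \<noteq> [] \<Longrightarrow> hd xs \<in> S \<Longrightarrow> last xs \<notin> S \<Longrightarrow> \<exists>a b. a \<in> S \<and> b \<notin> S \<and> {a, b} \<in> path_edges xs"
  by (induction xs rule: induct_list012) auto

fun walk_weight :: "('a set \<Rightarrow> nat) \<Rightarrow> 'a list \<Rightarrow> nat" where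
  "walk_weight w (a # b # xs) = w {a, b} + walk_weight w (b # xs)"
| "walk_weight w _ = 0"

lemma weight_path_edges: "distinct xs \<Longrightarrow> weight w (path_edges xs) = walk_weight w xs"
proof (induction xs rule: induct_list012)
  case (3 a b xs)
  then have "{a, b} \<notin> path_edges (b # xs)"
    using path_edges_subset_set by fastforce
  with 3 show ?case by (simp add: weight_def)
qed (simp_all add: weight_def)

lemma walk_weight_glue:
  "xs \<noteq> [] \<Longrightarrow> last xs = hd ys \<Longrightarrow> walk_weight w (xs @ tl ys) = walk_weight w xs + walk_weight w ys"
proof (induction xs rule: induct_list012)
  case (2 a)
  then show ?case by (cases ys) auto
qed auto

lemma walk_weight_conv_sum: "walk_weight w xs = (\<Sum>t < length xs - 1. w {xs ! t, xs ! Suc t})"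
  by (induction xs rule: induct_list012) (simp_all add: sum.lessThan_Suc_shift del: sum.lessThan_Suc)

lemma nat_unit_steps_attain:
  fixes f :: "nat \<Rightarrow> nat"
  assumes "\<And>p. p < n \<Longrightarrow> f (Suc p) \<le> Suc (f p)" "f 0 \<le> c" "c \<le> f n"
  shows "\<exists>p\<le>n. f p = c"
  using assms
proof (induction n)
  case (Suc n)
  show ?case
  proof (cases "c \<le> f n")
    case True
    with Suc obtain p where "p \<le> n" "f p = c" by force
    then show ?thesis by (intro exI[of _ p]) simp
  next
    case False
    have "f (Suc n) \<le> Suc (f n)" using Suc.prems(1) by simp
    with False Suc.prems(3) have "f (Suc n) = c" by linarith
    then show ?thesis by blast
  qed
qed simp

lemma card_le_card_if_witnesses:
  assumes "finite B" and "\<And>a. a \<in> A \<Longrightarrow> \<exists>b\<in>B. R a b"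
    and "\<And>a a' b. a \<in> A \<Longrightarrow> a' \<in> A \<Longrightarrow> b \<in> B \<Longrightarrow> R a b \<Longrightarrow> R a' b \<Longrightarrow> a = a'"
  shows "card A \<le> card B"
proof -
  obtain f where f: "\<And>a. a \<in> A \<Longrightarrow> f a \<in> B \<and> R a (f a)"
    using assms(2) by metis
  have "inj_on f A"
    using f assms(3) by (metis inj_onI)
  with f assms(1) show ?thesis
    by (intro card_inj_on_le) auto
qed

locale tree_plus_path =
  fixes V :: "'a set" and E ET :: "'a set set" and w :: "'a set \<Rightarrow> nat" and ps :: "'a list"
  assumes simple: "simple_graph V E"
    and weights: "\<forall>e\<in>E. w e \<in> {3, 4, 5}"
    and spanning_tree: "spanning_tree V E ET"
    and tree_weights: "\<forall>e\<in>ET. w e = 3"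
    and path: "is_path V E ps"
    and edges: "E = ET \<union> path_edges ps"
    and non_spanning: "set ps \<noteq> V"
    and no_11_cycle: "\<forall>cs. is_cycle V E cs \<longrightarrow> weight w (cycle_edges cs) \<noteq> 11"
    and minimal: "\<forall>qs. is_path (closed_nbhd V E (set ps))
                      (induced_edges E (closed_nbhd V E (set ps))) qs
                \<and> hd qs = hd ps \<and> last qs = last ps
              \<longrightarrow> weight w (path_edges ps) \<le> weight w (path_edges qs)"
begin

abbreviation N :: "'a set" where
  "N \<equiv> closed_nbhd V E (set ps)"

abbreviation k :: nat where
  "k \<equiv> length ps - 1"

definition step_weight :: "nat \<Rightarrow> nat" where
  "step_weight t = w {ps ! t, ps ! Suc t}"

definition seg_weight :: "nat \<Rightarrow> nat \<Rightarrow> nat" where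
  "seg_weight i j = (\<Sum>t = i..<j. step_weight t)"

lemma ps_ne: "ps \<noteq> []" and distinct_ps: "distinct ps" and set_ps_subset: "set ps \<subseteq> V"
  and path_edges_ps_subset: "path_edges ps \<subseteq> E"
  using path by (simp_all add: is_path_def)

lemma length_ps: "length ps = Suc k"
  using ps_ne by simp

lemma ET_subset: "ET \<subseteq> E" and connected_ET: "connected_graph V ET"
  using spanning_tree by (simp_all add: spanning_tree_def is_tree_def)

lemma finite_N: "finite N"
proof -
  have "N \<subseteq> V"
    using set_ps_subset by (auto simp: closed_nbhd_def)
  with simple show ?thesis
    by (auto simp: simple_graph_def intro: finite_subset)
qed

lemma set_ps_subset_N: "set ps \<subseteq> N"
  by (simp add: closed_nbhd_def)

lemma neighbour_in_N: "a \<in> set ps \<Longrightarrow> {a, b} \<in> E \<Longrightarrow> b \<in> N"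
  using simple_graph_edgeD(2)[OF simple] by (auto simp: closed_nbhd_def)

lemma off_path_weight: "{a, z} \<in> E \<Longrightarrow> z \<notin> set ps \<Longrightarrow> w {a, z} = 3"
  using edges tree_weights path_edges_subset_set by blast

lemma step_edge: "t < k \<Longrightarrow> {ps ! t, ps ! Suc t} \<in> E"
  using nth_edge_in_path_edges[of t ps] path_edges_ps_subset by auto

lemma step_weight_cases: "t < k \<Longrightarrow> step_weight t \<in> {3, 4, 5}"
  using weights step_edge by (simp add: step_weight_def)

lemma seg_weight_split: "i \<le> j \<Longrightarrow> j \<le> m \<Longrightarrow> seg_weight i m = seg_weight i j + seg_weight j m"
  by (simp add: seg_weight_def sum.atLeastLessThan_concat)

lemma seg_weight_lower: "j \<le> k \<Longrightarrow> 3 * (j - i) \<le> seg_weight i j"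
proof -
  assume "j \<le> k"
  have "3 \<le> step_weight t" if "t < k" for t
    using step_weight_cases[OF that] by auto
  with \<open>j \<le> k\<close> have "(\<Sum>t = i..<j. 3) \<le> seg_weight i j"
    unfolding seg_weight_def by (intro sum_mono) auto
  then show ?thesis by simp
qed

lemma walk_weight_take: "i \<le> k \<Longrightarrow> walk_weight w (take (Suc i) ps) = seg_weight 0 i"
  by (auto simp: walk_weight_conv_sum seg_weight_def step_weight_def atLeast0LessThan min_def
      intro!: sum.cong)

lemma walk_weight_drop: "j \<le> k \<Longrightarrow> walk_weight w (drop j ps) = seg_weight j k"
proof -
  assume "j \<le> k"
  then have "walk_weight w (drop j ps) = (\<Sum>t < k - j. step_weight (t + j))"
    by (auto simp: walk_weight_conv_sum step_weight_def add.commute intro!: sum.cong)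
  also have "\<dots> = seg_weight j (k - j + j)"
    using sum.shift_bounds_nat_ivl[of step_weight 0 j "k - j"]
    by (simp add: seg_weight_def atLeast0LessThan)
  also have "k - j + j = k"
    using \<open>j \<le> k\<close> by simp
  finally show ?thesis .
qed

lemma weight_ps: "weight w (path_edges ps) = seg_weight 0 k"
  using walk_weight_drop[of 0] distinct_ps by (simp add: weight_path_edges)

definition splice :: "nat \<Rightarrow> 'a list \<Rightarrow> nat \<Rightarrow> 'a list" where
  "splice i mid j = take (Suc i) ps @ mid @ drop j ps"

lemma splice_glue:
  fixes mid :: "'a list"
  assumes "i < j" "j \<le> k"
  defines "D \<equiv> ps ! i # mid @ [ps ! j]"
  shows "path_edges (splice i mid j)
           = path_edges (take (Suc i) ps) \<union> path_edges D \<union> path_edges (drop j ps)"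
    and "walk_weight w (splice i mid j) = seg_weight 0 i + walk_weight w D + seg_weight j k"
proof -
  define A where "A = take (Suc i) ps"
  define B where "B = drop j ps"
  have ij: "i < length ps" "j < length ps"
    using assms(1,2) length_ps by auto
  have A: "A \<noteq> []" "last A = hd (D @ tl B)" and B: "B \<noteq> []" "last D = hd B"
    using take_Suc_glue_drop(1,2)[OF ij(1)] ij
    by (simp_all add: A_def B_def D_def hd_drop_conv_nth)
  have splice: "splice i mid j = A @ tl (D @ tl B)"
    using B unfolding splice_def A_def[symmetric] B_def[symmetric] by (simp add: D_def)
  have D: "D \<noteq> []"
    by (simp add: D_def)
  show "path_edges (splice i mid j) = path_edges A \<union> path_edges D \<union> path_edges B"
    using path_edges_glue[OF A] path_edges_glue[OF D B(2)] by (simp add: splice Un_assoc)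
  have "walk_weight w (splice i mid j) = walk_weight w A + walk_weight w D + walk_weight w B"
    using walk_weight_glue[OF A] walk_weight_glue[OF D B(2)] by (simp add: splice)
  then show "walk_weight w (splice i mid j) = seg_weight 0 i + walk_weight w D + seg_weight j k"
    using assms(1,2) by (simp add: A_def B_def walk_weight_take walk_weight_drop)
qed

lemma hd_splice: "hd (splice i mid j) = hd ps"
  using ps_ne by (simp add: splice_def)

lemma last_splice: "j \<le> k \<Longrightarrow> last (splice i mid j) = last ps"
proof -
  assume "j \<le> k"
  then have "drop j ps \<noteq> []"
    using length_ps by simp
  then show ?thesis
    by (simp add: splice_def last_drop)
qed

lemma is_path_splice:
  assumes "i < j" "j \<le> k"
    and detour: "is_path N (induced_edges E N) (ps ! i # mid @ [ps ! j])"
    and off_path: "set mid \<inter> set ps = {}"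
  shows "is_path N (induced_edges E N) (splice i mid j)"
proof -
  have ij: "i < length ps" "j < length ps"
    using assms(1,2) length_ps by auto
  have "path_edges ps \<subseteq> induced_edges E N"
    using path_edges_ps_subset path_edges_subset_set set_ps_subset_N
    by (fastforce simp: induced_edges_def)
  moreover have "path_edges (take (Suc i) ps) \<subseteq> path_edges ps" "path_edges (drop j ps) \<subseteq> path_edges ps"
    using path_edges_split_at[OF ij(1)] path_edges_split_at[OF ij(2)] by auto
  ultimately have "path_edges (splice i mid j) \<subseteq> induced_edges E N"
    using detour splice_glue(1)[OF assms(1,2)] by (auto simp: is_path_def)
  moreover have "distinct (splice i mid j)"
  proof -
    have "set (take (Suc i) ps) \<inter> set (drop j ps) = {}"
      using set_take_disj_set_drop_if_distinct[OF distinct_ps] assms(1) by simp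
    then show ?thesis
      using distinct_ps detour off_path
      by (auto simp: splice_def is_path_def dest: in_set_takeD in_set_dropD)
  qed
  moreover have "set (splice i mid j) \<subseteq> N"
    using detour set_ps_subset_N
    by (auto simp: splice_def is_path_def dest: in_set_takeD in_set_dropD)
  ultimately show ?thesis
    using ps_ne by (simp add: is_path_def splice_def)
qed

lemma seg_weight_le_detour:
  assumes "i < j" "j \<le> k"
    and "is_path N (induced_edges E N) (ps ! i # mid @ [ps ! j])"
    and "set mid \<inter> set ps = {}"
  shows "seg_weight i j \<le> walk_weight w (ps ! i # mid @ [ps ! j])"
proof -
  have "is_path N (induced_edges E N) (splice i mid j)"
    using is_path_splice[OF assms] .
  then have "weight w (path_edges ps) \<le> walk_weight w (splice i mid j)"
    using minimal hd_splice last_splice[OF assms(2)] weight_path_edges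
    by (metis is_path_def)
  then show ?thesis
    using weight_ps splice_glue(2)[OF assms(1,2)] seg_weight_split[of 0 i j] seg_weight_split[of 0 j k] assms(1,2)
    by simp
qed

lemma nth_ps_in_N: "i \<le> k \<Longrightarrow> ps ! i \<in> N"
  using length_ps set_ps_subset_N by (simp add: subset_iff)

lemma nth_ps_eq_iff: "i \<le> k \<Longrightarrow> j \<le> k \<Longrightarrow> ps ! i = ps ! j \<longleftrightarrow> i = j"
  using distinct_ps length_ps by (simp add: nth_eq_iff_index_eq)

lemma seg_weight_le_chord:
  assumes "i < j" "j \<le> k" "{ps ! i, ps ! j} \<in> E"
  shows "seg_weight i j \<le> w {ps ! i, ps ! j}"
proof -
  have "is_path N (induced_edges E N) [ps ! i, ps ! j]"
    using assms nth_ps_in_N nth_ps_eq_iff by (simp add: is_path_def induced_edges_def)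
  then show ?thesis
    using seg_weight_le_detour[of i j "[]"] assms(1,2) by simp
qed

lemma seg_weight_le_6_if_common_neighbour:
  assumes "i < j" "j \<le> k" "z \<notin> set ps" "{ps ! i, z} \<in> E" "{ps ! j, z} \<in> E"
  shows "seg_weight i j \<le> 6"
proof -
  have "ps ! i \<in> set ps"
    using assms(1,2) length_ps by simp
  then have "z \<in> N"
    using assms(4) by (rule neighbour_in_N)
  then have "is_path N (induced_edges E N) [ps ! i, z, ps ! j]"
    using assms nth_ps_in_N nth_ps_eq_iff
    by (auto simp: is_path_def induced_edges_def insert_commute)
  then have "seg_weight i j \<le> w {ps ! i, z} + w {z, ps ! j}"
    using seg_weight_le_detour[of i j "[z]"] assms(1-3) by simp
  moreover have "w {ps ! i, z} = 3" "w {ps ! j, z} = 3"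
    using off_path_weight assms(3-5) by simp_all
  ultimately show ?thesis
    by (simp add: insert_commute)
qed

lemma tree_chord_is_light_step:
  assumes "i < j" "j \<le> k" "{ps ! i, ps ! j} \<in> ET"
  shows "j = Suc i" "step_weight i = 3"
proof -
  have "seg_weight i j \<le> 3"
    using seg_weight_le_chord assms ET_subset tree_weights by fastforce
  with seg_weight_lower[OF assms(2), of i] assms(1) show "j = Suc i"
    by linarith
  with \<open>seg_weight i j \<le> 3\<close> step_weight_cases[of i] assms(2) show "step_weight i = 3"
    by (auto simp: seg_weight_def)
qed

lemma common_neighbour_span:
  assumes "i < j" "j \<le> k" "z \<notin> set ps" "{ps ! i, z} \<in> E" "{ps ! j, z} \<in> E"
  shows "j = Suc i \<or> j = Suc (Suc i) \<and> step_weight i = 3 \<and> step_weight (Suc i) = 3"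
proof -
  have "seg_weight i j \<le> 6"
    using seg_weight_le_6_if_common_neighbour[OF assms] .
  with seg_weight_lower[OF assms(2), of i] assms(1) have "j = Suc i \<or> j = Suc (Suc i)"
    by linarith
  moreover have "step_weight i = 3 \<and> step_weight (Suc i) = 3" if "j = Suc (Suc i)"
    using \<open>seg_weight i j \<le> 6\<close> step_weight_cases[of i] step_weight_cases[of "Suc i"] that assms(2)
    by (auto simp: seg_weight_def)
  ultimately show ?thesis by blast
qed

definition linked :: "nat \<Rightarrow> bool" where
  "linked t \<longleftrightarrow> (\<exists>z. z \<notin> set ps \<and> {ps ! t, z} \<in> E \<and> {ps ! Suc t, z} \<in> E)"

lemma linked_step_weight_le_4:
  assumes "t < k" "linked t"
  shows "step_weight t \<le> 4"
proof -
  obtain z where z: "z \<notin> set ps" "{ps ! t, z} \<in> E" "{ps ! Suc t, z} \<in> E"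
    using assms(2) by (auto simp: linked_def)
  define a b where "a = ps ! t" and "b = ps ! Suc t"
  have ab: "a \<in> set ps" "b \<in> set ps" "a \<noteq> b" "{a, b} \<in> E"
    using assms(1) length_ps nth_ps_eq_iff[of t "Suc t"] step_edge[OF assms(1)]
    by (simp_all add: a_def b_def)
  have "z \<in> V"
    using simple_graph_edgeD(2)[OF simple z(2)] .
  then have "is_cycle V E [z, a, b]"
    using ab z set_ps_subset by (auto simp: is_cycle_def is_path_def a_def b_def insert_commute)
  moreover have "weight w (cycle_edges [z, a, b]) = 6 + step_weight t"
  proof -
    have "w {z, a} = 3" "w {b, z} = 3"
      using off_path_weight[OF z(2,1)] off_path_weight[OF z(3,1)]
      by (simp_all add: a_def b_def insert_commute)
    moreover have "{b, z} \<noteq> {z, a}" "{b, z} \<noteq> {a, b}" "{z, a} \<noteq> {a, b}"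
      using ab z by (auto simp: doubleton_eq_iff)
    ultimately show ?thesis
      by (simp add: cycle_edges_def weight_def step_weight_def a_def b_def)
  qed
  ultimately have "step_weight t \<noteq> 5"
    using no_11_cycle by auto
  then show ?thesis
    using step_weight_cases[OF assms(1)] by auto
qed

definition separating_steps :: "nat set" where
  "separating_steps = {t. t < k \<and> 4 \<le> step_weight t \<and> \<not> linked t}"

definition linked_heavy_steps :: "nat set" where
  "linked_heavy_steps = {t. t < k \<and> 4 \<le> step_weight t \<and> linked t}"

definition block :: "nat \<Rightarrow> nat" where
  "block p = card (separating_steps \<inter> {..<p})"

lemma finite_separating_steps: "finite separating_steps"
  by (simp add: separating_steps_def)

lemma block_0: "block 0 = 0"
  by (simp add: block_def)

lemma block_k: "block k = card separating_steps"
  by (simp add: block_def separating_steps_def Int_absorb2 subset_eq)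

lemma block_Suc: "block (Suc p) = (if p \<in> separating_steps then Suc (block p) else block p)"
  using finite_separating_steps
  by (simp add: block_def lessThan_Suc Int_insert_right card_insert_if)

lemma block_eq_if_tree_edge:
  assumes "p \<le> k" "q \<le> k" "{ps ! p, ps ! q} \<in> ET"
  shows "block p = block q"
proof -
  have ordered: "block i = block j" if "i < j" "j \<le> k" "{ps ! i, ps ! j} \<in> ET" for i j
    using tree_chord_is_light_step[OF that] block_Suc by (simp add: separating_steps_def)
  show ?thesis
  proof (cases p q rule: linorder_cases)
    case less
    then show ?thesis using ordered assms by blast
  next
    case greater
    then show ?thesis using ordered[of q p] assms by (simp add: insert_commute)
  qed simp
qed

lemma block_eq_if_common_neighbour:
  assumes "p \<le> k" "q \<le> k" "z \<notin> set ps" "{ps ! p, z} \<in> E" "{ps ! q, z} \<in> E"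
  shows "block p = block q"
proof -
  have ordered: "block i = block j"
    if "i < j" "j \<le> k" "{ps ! i, z} \<in> E" "{ps ! j, z} \<in> E" for i j
  proof -
    from common_neighbour_span[OF that(1,2) assms(3) that(3,4)]
    consider "j = Suc i" | "j = Suc (Suc i)" "step_weight i = 3" "step_weight (Suc i) = 3"
      by blast
    then show ?thesis
    proof cases
      case 1
      with that assms(3) have "linked i"
        by (auto simp: linked_def)
      with 1 show ?thesis
        using block_Suc by (simp add: separating_steps_def)
    next
      case 2
      then show ?thesis
        using block_Suc by (simp add: separating_steps_def)
    qed
  qed
  show ?thesis
  proof (cases p q rule: linorder_cases)
    case less
    then show ?thesis using ordered assms by blast
  next
    case greater
    then show ?thesis using ordered[of q p] assms by simp
  qed simp
qed

lemma block_has_outside_neighbour: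
  assumes "c \<le> card separating_steps"
  shows "\<exists>b \<in> N - set ps. \<exists>q \<le> k. block q = c \<and> {ps ! q, b} \<in> E"
proof -
  obtain p where p: "p \<le> k" "block p = c"
    using nat_unit_steps_attain[of k block c] block_Suc block_0 block_k assms by fastforce
  obtain u where u: "u \<in> V" "u \<notin> set ps"
    using non_spanning set_ps_subset by blast
  have "ps ! p \<in> V"
    using p(1) length_ps set_ps_subset by (simp add: subset_iff)
  then obtain tp where tp: "is_path V ET tp" "hd tp = ps ! p" "last tp = u"
    using connected_ET u(1) by (auto simp: connected_graph_def)
  define S where "S = {ps ! q | q. q \<le> k \<and> block q = c}"
  have "hd tp \<in> S" "last tp \<notin> S"
    using tp p u(2) length_ps by (auto simp: S_def)
  then obtain a b where ab: "a \<in> S" "b \<notin> S" "{a, b} \<in> ET"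
    using path_edges_crossing[of tp S] tp(1) by (auto simp: is_path_def)
  then obtain q where q: "q \<le> k" "a = ps ! q" "block q = c"
    by (auto simp: S_def)
  have "b \<notin> set ps"
  proof
    assume "b \<in> set ps"
    then obtain q' where "q' \<le> k" "b = ps ! q'"
      using length_ps by (metis in_set_conv_nth less_Suc_eq_le)
    with q ab show False
      using block_eq_if_tree_edge[of q q'] by (auto simp: S_def)
  qed
  moreover have "b \<in> N"
    using neighbour_in_N[of a b] q ab(3) ET_subset length_ps by auto
  ultimately show ?thesis
    using q ab(3) ET_subset by blast
qed

lemma card_separating_steps_less: "card separating_steps < card (N - set ps)"
proof -
  have "card {0..card separating_steps} \<le> card (N - set ps)"
  proof (rule card_le_card_if_witnesses)
    show "finite (N - set ps)"
      using finite_N by simp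
  next
    fix c assume "c \<in> {0..card separating_steps}"
    then show "\<exists>b \<in> N - set ps. \<exists>q \<le> k. block q = c \<and> {ps ! q, b} \<in> E"
      using block_has_outside_neighbour by simp
  next
    fix c c' b
    assume "b \<in> N - set ps" "\<exists>q \<le> k. block q = c \<and> {ps ! q, b} \<in> E"
      "\<exists>q \<le> k. block q = c' \<and> {ps ! q, b} \<in> E"
    then show "c = c'"
      using block_eq_if_common_neighbour by blast
  qed
  then show ?thesis
    by simp
qed

lemma no_common_neighbour_across_heavy_step:
  assumes "t < t'" "t' < k" "4 \<le> step_weight t" "z \<notin> set ps"
    and "{ps ! t, z} \<in> E" "{ps ! Suc t', z} \<in> E"
  shows False
  using common_neighbour_span[of t "Suc t'" z] assms by auto

lemma card_linked_heavy_steps_le: "card linked_heavy_steps \<le> card (N - set ps)"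
proof (rule card_le_card_if_witnesses)
  show "finite (N - set ps)"
    using finite_N by simp
next
  fix t assume "t \<in> linked_heavy_steps"
  then obtain z where z: "z \<notin> set ps" "{ps ! t, z} \<in> E" "{ps ! Suc t, z} \<in> E" and "t < k"
    by (auto simp: linked_heavy_steps_def linked_def)
  then have "ps ! t \<in> set ps"
    using length_ps by simp
  with z have "z \<in> N - set ps"
    using neighbour_in_N by blast
  with z show "\<exists>z \<in> N - set ps. {ps ! t, z} \<in> E \<and> {ps ! Suc t, z} \<in> E"
    by blast
next
  fix t t' z
  assume "t \<in> linked_heavy_steps" "t' \<in> linked_heavy_steps" "z \<in> N - set ps"
    "{ps ! t, z} \<in> E \<and> {ps ! Suc t, z} \<in> E" "{ps ! t', z} \<in> E \<and> {ps ! Suc t', z} \<in> E"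
  then show "t = t'"
    using no_common_neighbour_across_heavy_step[of t t' z] no_common_neighbour_across_heavy_step[of t' t z]
    by (cases t t' rule: linorder_cases) (auto simp: linked_heavy_steps_def)
qed

lemma step_weight_le:
  assumes "t < k"
  shows "step_weight t \<le> 3 + 2 * of_bool (t \<in> separating_steps) + of_bool (t \<in> linked_heavy_steps)"
  using step_weight_cases[OF assms] linked_step_weight_le_4[OF assms] assms
  by (auto simp: separating_steps_def linked_heavy_steps_def)

lemma weight_ps_le:
  "weight w (path_edges ps) \<le> 3 * k + 2 * card separating_steps + card linked_heavy_steps"
proof -
  have "weight w (path_edges ps)
      \<le> (\<Sum>t<k. 3 + 2 * of_bool (t \<in> separating_steps) + of_bool (t \<in> linked_heavy_steps))"
    unfolding weight_ps seg_weight_def atLeast0LessThan by (intro sum_mono step_weight_le) simp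
  also have "\<dots> = 3 * k + 2 * card separating_steps + card linked_heavy_steps"
  proof -
    have "separating_steps \<subseteq> {..<k}" "linked_heavy_steps \<subseteq> {..<k}"
      by (auto simp: separating_steps_def linked_heavy_steps_def)
    then show ?thesis
      by (simp add: sum.distrib sum_distrib_left[symmetric] Int_absorb1)
  qed
  finally show ?thesis .
qed

lemma card_N: "card N = Suc k + card (N - set ps)"
  using card_Diff_subset[of "set ps" N] card_mono[OF finite_N set_ps_subset_N]
    distinct_card[OF distinct_ps] length_ps set_ps_subset_N finite_N
  by (simp add: finite_subset)

theorem weight_ps_plus_5_le: "weight w (path_edges ps) + 5 \<le> 3 * card N"
  using weight_ps_le card_N card_separating_steps_less card_linked_heavy_steps_le by linarith

end

theorem lemma5p1:
  fixes V :: "'a set" and E ET :: "'a set set" and w :: "'a set \<Rightarrow> nat"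
    and ps :: "'a list" and x y :: 'a and l :: nat
  assumes "simple_graph V E"
    and "\<forall>e\<in>E. w e \<in> {3, 4, 5}"
    and "spanning_tree V E ET"
    and "\<forall>e\<in>ET. w e = 3"
    and "is_path V E ps"
    and "E = ET \<union> path_edges ps"
    and "set ps \<noteq> V"
    and "hd ps = x" and "last ps = y"
    and "l = weight w (path_edges ps)"
    and "\<forall>cs. is_cycle V E cs \<longrightarrow> weight w (cycle_edges cs) \<noteq> 11"
    and "\<forall>qs. is_path (closed_nbhd V E (set ps))
                      (induced_edges E (closed_nbhd V E (set ps))) qs
                \<and> hd qs = x \<and> last qs = y
              \<longrightarrow> l \<le> weight w (path_edges qs)"
  shows "real (card (closed_nbhd V E (set ps))) \<ge> real l / 3 + 5 / 3"
proof -
  interpret tree_plus_path V E ET w ps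
    using assms by unfold_locales auto
  have "l + 5 \<le> 3 * card (closed_nbhd V E (set ps))"
    using weight_ps_plus_5_le assms(10) by simp
  then have "real (l + 5) \<le> real (3 * card (closed_nbhd V E (set ps)))"
    by (simp only: of_nat_le_iff)
  then show ?thesis
    by simp
qed

end
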